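(* Let $y_A\colon A\to\hat A$ be a yoneda embedding in a double category $\mathcal K$. If a cell $\eta$ with horizontal source $J\colon A\nrightarrow B$, vertical sides $y_A$ and $l\colon B\to\hat A$, and horizontal target $1_{\hat A}$ defines $l$ as the left Kan extension of $y_A$ along $J$, then $\eta$ is cartesian and, moreover, it defines $l$ as the pointwise left Kan extension of $y_A$ along $J$.
   Context: Double categories: a double category has objects, vertical morphisms (composition $\circ$), horizontal morphisms $J\colon A\nrightarrow B$ (composition $\odot$ in diagrammatic order, units $1_A$) and cells with horizontal source $J\colon A\nrightarrow B$, horizontal target $K\colon C\nrightarrow D$, vertical sides $f\colon A\to C$, $g\colon B\to D$. Vertical cells are cells whose horizontal source and target are units. A cell $\phi\colon J\Rightarrow K$ with sides $f,g$ is cartesian if every cell $H\Rightarrow K$ with sides $f\circ h,g\circ k$ factors uniquely through $\phi$ via a cell $H\Rightarrow J$ with sides $h,k$. Kan extensions: a cell $\eta$ with horizontal source $J\colon A\nrightarrow B$, vertical sides $d\colon A\to M$, $l\colon B\to M$ and target $1_M$ defines $l$ as the left Kan extension of $d$ along $J$ if every cell with source $J$, sides $d,k$ and target $1_M$ factors uniquely as $\eta$ horizontally composed with a vertical cell $l\Rightarrow k$; pointwise if moreover for every $H\colon B\nrightarrow C$ every cell with horizontal source $J\odot H$, sides $d$ and $k\colon C\to M$ and target $1_M$ factors uniquely as $\eta\odot\psi$ with $\psi\colon H\Rightarrow 1_M$ having sides $l,k$. Yoneda embedding: a vertical morphism $y_A\colon A\to\hat A$ such that (c) for every $J\colon A\nrightarrow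 B$ there exists a cartesian cell $J\Rightarrow 1_{\hat A}$ with vertical sides $y_A$ and some $g\colon B\to\hat A$; and (e) every cartesian cell $J\Rightarrow 1_{\hat A}$ with vertical sides $y_A,l$ defines $l$ as the pointwise left Kan extension of $y_A$ along $J$. *)

theory Defs
  imports Main
begin

text \<open>
  All elements of the types 'o, 'v, 'h, 'c are
  objects, vertical morphisms, horizontal morphisms and cells respectively;
  the (total) composition operations are only constrained on composable
  arguments.
  Conventions:
   vcomp D g f  = g o f   (vertical morphisms, f first)
   hcomp D J H  = J (.) H (horizontal morphisms, diagrammatic: J : A -|-> B, H : B -|-> C)
   ccomp D psi phi = vertical composite of cells, phi on top, psi below
   chcomp D phi psi = horizontal composite of cells, diagrammatic
   cunit D f    = unit cell 1_f : 1_A => 1_C of f : A -> C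
   assoc D J H K : (J (.) H) (.) K => J (.) (H (.) K)
   lunitor D J   : 1_A (.) J => J
   runitor D J   : J (.) 1_B => J
\<close>

record ('o, 'v, 'h, 'c) dbl =
  vdom :: "'v \<Rightarrow> 'o"
  vcod :: "'v \<Rightarrow> 'o"
  vid :: "'o \<Rightarrow> 'v"
  vcomp :: "'v \<Rightarrow> 'v \<Rightarrow> 'v"
  hsrc :: "'h \<Rightarrow> 'o"
  htgt :: "'h \<Rightarrow> 'o"
  hunit :: "'o \<Rightarrow> 'h"
  hcomp :: "'h \<Rightarrow> 'h \<Rightarrow> 'h"
  csrc :: "'c \<Rightarrow> 'h"
  ctgt :: "'c \<Rightarrow> 'h"
  cleft :: "'c \<Rightarrow> 'v"
  cright :: "'c \<Rightarrow> 'v"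
  cid :: "'h \<Rightarrow> 'c"
  ccomp :: "'c \<Rightarrow> 'c \<Rightarrow> 'c"
  cunit :: "'v \<Rightarrow> 'c"
  chcomp :: "'c \<Rightarrow> 'c \<Rightarrow> 'c"
  assoc :: "'h \<Rightarrow> 'h \<Rightarrow> 'h \<Rightarrow> 'c"
  lunitor :: "'h \<Rightarrow> 'c"
  runitor :: "'h \<Rightarrow> 'c"

definition is_cell :: "('o,'v,'h,'c) dbl \<Rightarrow> 'c \<Rightarrow> 'h \<Rightarrow> 'h \<Rightarrow> 'v \<Rightarrow> 'v \<Rightarrow> bool" where
  "is_cell D \<phi> J K f g \<longleftrightarrow>
     csrc D \<phi> = J \<and> ctgt D \<phi> = K \<and> cleft D \<phi> = f \<and> cright D \<phi> = g"

definition iso_cell :: "('o,'v,'h,'c) dbl \<Rightarrow> 'c \<Rightarrow> bool" where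
  "iso_cell D \<phi> \<longleftrightarrow> (\<exists>\<psi>. csrc D \<psi> = ctgt D \<phi> \<and> ctgt D \<psi> = csrc D \<phi> \<and>
      ccomp D \<psi> \<phi> = cid D (csrc D \<phi>) \<and> ccomp D \<phi> \<psi> = cid D (ctgt D \<phi>))"

locale double_category =
  fixes D :: "('o,'v,'h,'c) dbl"
  assumes
    vid_dom: "vdom D (vid D A) = A" and
    vid_cod: "vcod D (vid D A) = A" and
    vcomp_dom: "vcod D f = vdom D g \<Longrightarrow> vdom D (vcomp D g f) = vdom D f" and
    vcomp_cod: "vcod D f = vdom D g \<Longrightarrow> vcod D (vcomp D g f) = vcod D g" and
    vcomp_idl: "vcomp D (vid D (vcod D f)) f = f" and
    vcomp_idr: "vcomp D f (vid D (vdom D f)) = f" and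
    vcomp_assoc: "\<lbrakk>vcod D f = vdom D g; vcod D g = vdom D h\<rbrakk> \<Longrightarrow>
       vcomp D h (vcomp D g f) = vcomp D (vcomp D h g) f" and
    hunit_src: "hsrc D (hunit D A) = A" and
    hunit_tgt: "htgt D (hunit D A) = A" and
    hcomp_src: "htgt D J = hsrc D H \<Longrightarrow> hsrc D (hcomp D J H) = hsrc D J" and
    hcomp_tgt: "htgt D J = hsrc D H \<Longrightarrow> htgt D (hcomp D J H) = htgt D H" and
    cell_bdry: "hsrc D (csrc D \<phi>) = vdom D (cleft D \<phi>) \<and> htgt D (csrc D \<phi>) = vdom D (cright D \<phi>)
       \<and> hsrc D (ctgt D \<phi>) = vcod D (cleft D \<phi>) \<and> htgt D (ctgt D \<phi>) = vcod D (cright D \<phi>)" and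
    cid_cell: "is_cell D (cid D J) J J (vid D (hsrc D J)) (vid D (htgt D J))" and
    ccomp_cell: "ctgt D \<phi> = csrc D \<psi> \<Longrightarrow>
       is_cell D (ccomp D \<psi> \<phi>) (csrc D \<phi>) (ctgt D \<psi>)
         (vcomp D (cleft D \<psi>) (cleft D \<phi>)) (vcomp D (cright D \<psi>) (cright D \<phi>))" and
    ccomp_idl: "ccomp D (cid D (ctgt D \<phi>)) \<phi> = \<phi>" and
    ccomp_idr: "ccomp D \<phi> (cid D (csrc D \<phi>)) = \<phi>" and
    ccomp_assoc: "\<lbrakk>ctgt D \<phi> = csrc D \<psi>; ctgt D \<psi> = csrc D \<chi>\<rbrakk> \<Longrightarrow>
       ccomp D \<chi> (ccomp D \<psi> \<phi>) = ccomp D (ccomp D \<chi> \<psi>) \<phi>" and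
    cunit_cell: "is_cell D (cunit D f) (hunit D (vdom D f)) (hunit D (vcod D f)) f f" and
    cunit_id: "cunit D (vid D A) = cid D (hunit D A)" and
    cunit_comp: "vcod D f = vdom D g \<Longrightarrow> cunit D (vcomp D g f) = ccomp D (cunit D g) (cunit D f)" and
    chcomp_cell: "cright D \<phi> = cleft D \<psi> \<Longrightarrow>
       is_cell D (chcomp D \<phi> \<psi>) (hcomp D (csrc D \<phi>) (csrc D \<psi>)) (hcomp D (ctgt D \<phi>) (ctgt D \<psi>))
         (cleft D \<phi>) (cright D \<psi>)" and
    chcomp_id: "htgt D J = hsrc D H \<Longrightarrow> chcomp D (cid D J) (cid D H) = cid D (hcomp D J H)" and
    interchange: "\<lbrakk>ctgt D \<phi> = csrc D \<phi>'; ctgt D \<psi> = csrc D \<psi>';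
        cright D \<phi> = cleft D \<psi>; cright D \<phi>' = cleft D \<psi>'\<rbrakk> \<Longrightarrow>
       chcomp D (ccomp D \<phi>' \<phi>) (ccomp D \<psi>' \<psi>) = ccomp D (chcomp D \<phi>' \<psi>') (chcomp D \<phi> \<psi>)" and
    assoc_cell: "\<lbrakk>htgt D J = hsrc D H; htgt D H = hsrc D K\<rbrakk> \<Longrightarrow>
       is_cell D (assoc D J H K) (hcomp D (hcomp D J H) K) (hcomp D J (hcomp D H K))
         (vid D (hsrc D J)) (vid D (htgt D K))" and
    assoc_iso: "\<lbrakk>htgt D J = hsrc D H; htgt D H = hsrc D K\<rbrakk> \<Longrightarrow> iso_cell D (assoc D J H K)" and
    assoc_nat: "\<lbrakk>cright D \<phi> = cleft D \<psi>; cright D \<psi> = cleft D \<chi>\<rbrakk> \<Longrightarrow>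
       ccomp D (assoc D (ctgt D \<phi>) (ctgt D \<psi>) (ctgt D \<chi>)) (chcomp D (chcomp D \<phi> \<psi>) \<chi>)
       = ccomp D (chcomp D \<phi> (chcomp D \<psi> \<chi>)) (assoc D (csrc D \<phi>) (csrc D \<psi>) (csrc D \<chi>))" and
    lunitor_cell: "is_cell D (lunitor D J) (hcomp D (hunit D (hsrc D J)) J) J
         (vid D (hsrc D J)) (vid D (htgt D J))" and
    lunitor_iso: "iso_cell D (lunitor D J)" and
    lunitor_nat: "ccomp D (lunitor D (ctgt D \<phi>)) (chcomp D (cunit D (cleft D \<phi>)) \<phi>)
       = ccomp D \<phi> (lunitor D (csrc D \<phi>))" and
    runitor_cell: "is_cell D (runitor D J) (hcomp D J (hunit D (htgt D J))) J
         (vid D (hsrc D J)) (vid D (htgt D J))" and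
    runitor_iso: "iso_cell D (runitor D J)" and
    runitor_nat: "ccomp D (runitor D (ctgt D \<phi>)) (chcomp D \<phi> (cunit D (cright D \<phi>)))
       = ccomp D \<phi> (runitor D (csrc D \<phi>))" and
    pentagon: "\<lbrakk>htgt D J = hsrc D H; htgt D H = hsrc D K; htgt D K = hsrc D L\<rbrakk> \<Longrightarrow>
       ccomp D (assoc D J H (hcomp D K L)) (assoc D (hcomp D J H) K L)
       = ccomp D (chcomp D (cid D J) (assoc D H K L))
           (ccomp D (assoc D J (hcomp D H K) L) (chcomp D (assoc D J H K) (cid D L)))" and
    triangle: "htgt D J = hsrc D H \<Longrightarrow>
       ccomp D (chcomp D (cid D J) (lunitor D H)) (assoc D J (hunit D (htgt D J)) H)
       = chcomp D (runitor D J) (cid D H)"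

definition cartesian :: "('o,'v,'h,'c) dbl \<Rightarrow> 'c \<Rightarrow> bool" where
  "cartesian D \<phi> \<longleftrightarrow>
    (\<forall>\<psi> h k. vcod D h = vdom D (cleft D \<phi>) \<and> vcod D k = vdom D (cright D \<phi>) \<and>
       ctgt D \<psi> = ctgt D \<phi> \<and>
       cleft D \<psi> = vcomp D (cleft D \<phi>) h \<and> cright D \<psi> = vcomp D (cright D \<phi>) k \<longrightarrow>
       (\<exists>!\<chi>. is_cell D \<chi> (csrc D \<psi>) (csrc D \<phi>) h k \<and> ccomp D \<phi> \<chi> = \<psi>))"

definition vertical_cell :: "('o,'v,'h,'c) dbl \<Rightarrow> 'c \<Rightarrow> 'v \<Rightarrow> 'v \<Rightarrow> bool" where
  "vertical_cell D \<nu> f g \<longleftrightarrow>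
     is_cell D \<nu> (hunit D (vdom D f)) (hunit D (vcod D f)) f g"

text \<open>The horizontal composite eta (.) nu : J (.) 1_B => 1_M (.) 1_M is identified with a
  cell J => 1_M via the unitors: zeta "equals" eta (.) nu means
  zeta o rho_J = lambda_(1_M) o (eta (.) nu).\<close>
definition left_kan :: "('o,'v,'h,'c) dbl \<Rightarrow> 'c \<Rightarrow> 'h \<Rightarrow> 'v \<Rightarrow> 'v \<Rightarrow> bool" where
  "left_kan D \<eta> J d l \<longleftrightarrow>
     is_cell D \<eta> J (hunit D (vcod D d)) d l \<and>
     (\<forall>\<zeta> k. is_cell D \<zeta> J (hunit D (vcod D d)) d k \<longrightarrow>
        (\<exists>!\<nu>. vertical_cell D \<nu> l k \<and>
           ccomp D \<zeta> (runitor D J) = ccomp D (lunitor D (hunit D (vcod D d))) (chcomp D \<eta> \<nu>)))"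

definition pointwise_left_kan :: "('o,'v,'h,'c) dbl \<Rightarrow> 'c \<Rightarrow> 'h \<Rightarrow> 'v \<Rightarrow> 'v \<Rightarrow> bool" where
  "pointwise_left_kan D \<eta> J d l \<longleftrightarrow>
     left_kan D \<eta> J d l \<and>
     (\<forall>H \<zeta> k. hsrc D H = htgt D J \<and> is_cell D \<zeta> (hcomp D J H) (hunit D (vcod D d)) d k \<longrightarrow>
        (\<exists>!\<psi>. is_cell D \<psi> H (hunit D (vcod D d)) l k \<and>
           \<zeta> = ccomp D (lunitor D (hunit D (vcod D d))) (chcomp D \<eta> \<psi>)))"

text \<open>y : A -> A^ is a yoneda embedding (conditions (c) and (e)).\<close>
definition yoneda_embedding :: "('o,'v,'h,'c) dbl \<Rightarrow> 'v \<Rightarrow> bool" where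
  "yoneda_embedding D y \<longleftrightarrow>
     (\<forall>J. hsrc D J = vdom D y \<longrightarrow>
        (\<exists>\<phi> g. is_cell D \<phi> J (hunit D (vcod D y)) y g \<and> cartesian D \<phi>)) \<and>
     (\<forall>\<phi> J l. is_cell D \<phi> J (hunit D (vcod D y)) y l \<and> cartesian D \<phi> \<longrightarrow>
        pointwise_left_kan D \<phi> J y l)"

end

theory Submission
  imports Defs
begin

text \<open>The yoneda embedding provides a cartesian cell \<phi> : J \<Rightarrow> 1 with sides y and some g, and
  \<phi> defines g as a pointwise left Kan extension. Since \<eta> and \<phi> are both left Kan extensions
  of y along J, each factors through the other by a vertical cell, \<nu> : l \<Rightarrow> g and
  \<nu>' : g \<Rightarrow> l, and the uniqueness part of the universal property of \<eta> forces
  the composite \<nu>' \<nu> to be the identity of l.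
  With this comparison, factorisations through \<phi> are transported to factorisations through
  \<eta> and back, so \<eta> inherits both cartesianness and the pointwise Kan property from \<phi>.
  The only coherence needed is that the left and right unitors agree on horizontal units.\<close>

context double_category
begin

abbreviation cell_comp (infix "\<cdot>" 70) where "\<psi> \<cdot> \<phi> \<equiv> ccomp D \<psi> \<phi>"
abbreviation cell_hcomp (infix "\<odot>" 75) where "\<phi> \<odot> \<psi> \<equiv> chcomp D \<phi> \<psi>"

lemma ccomp_bdry [simp]:
  assumes "ctgt D \<phi> = csrc D \<psi>"
  shows "csrc D (\<psi> \<cdot> \<phi>) = csrc D \<phi>" "ctgt D (\<psi> \<cdot> \<phi>) = ctgt D \<psi>"
    "cleft D (\<psi> \<cdot> \<phi>) = vcomp D (cleft D \<psi>) (cleft D \<phi>)"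
    "cright D (\<psi> \<cdot> \<phi>) = vcomp D (cright D \<psi>) (cright D \<phi>)"
  using ccomp_cell[OF assms] by (auto simp: is_cell_def)

lemma chcomp_bdry [simp]:
  assumes "cright D \<phi> = cleft D \<psi>"
  shows "csrc D (\<phi> \<odot> \<psi>) = hcomp D (csrc D \<phi>) (csrc D \<psi>)"
    "ctgt D (\<phi> \<odot> \<psi>) = hcomp D (ctgt D \<phi>) (ctgt D \<psi>)"
    "cleft D (\<phi> \<odot> \<psi>) = cleft D \<phi>" "cright D (\<phi> \<odot> \<psi>) = cright D \<psi>"
  using chcomp_cell[OF assms] by (auto simp: is_cell_def)

lemma cid_bdry [simp]: "csrc D (cid D J) = J" "ctgt D (cid D J) = J"
  "cleft D (cid D J) = vid D (hsrc D J)" "cright D (cid D J) = vid D (htgt D J)"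
  using cid_cell by (auto simp: is_cell_def)

lemma cunit_bdry [simp]:
  "csrc D (cunit D f) = hunit D (vdom D f)" "ctgt D (cunit D f) = hunit D (vcod D f)"
  "cleft D (cunit D f) = f" "cright D (cunit D f) = f"
  using cunit_cell by (auto simp: is_cell_def)

lemma lunitor_bdry [simp]:
  "csrc D (lunitor D J) = hcomp D (hunit D (hsrc D J)) J" "ctgt D (lunitor D J) = J"
  "cleft D (lunitor D J) = vid D (hsrc D J)" "cright D (lunitor D J) = vid D (htgt D J)"
  using lunitor_cell by (auto simp: is_cell_def)

lemma runitor_bdry [simp]:
  "csrc D (runitor D J) = hcomp D J (hunit D (htgt D J))" "ctgt D (runitor D J) = J"
  "cleft D (runitor D J) = vid D (hsrc D J)" "cright D (runitor D J) = vid D (htgt D J)"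
  using runitor_cell by (auto simp: is_cell_def)

lemma assoc_bdry [simp]:
  assumes "htgt D J = hsrc D H" "htgt D H = hsrc D K"
  shows "csrc D (assoc D J H K) = hcomp D (hcomp D J H) K"
    "ctgt D (assoc D J H K) = hcomp D J (hcomp D H K)"
    "cleft D (assoc D J H K) = vid D (hsrc D J)" "cright D (assoc D J H K) = vid D (htgt D K)"
  using assoc_cell[OF assms] by (auto simp: is_cell_def)

lemma cell_bdry_simps [simp]:
  "hsrc D (csrc D \<phi>) = vdom D (cleft D \<phi>)" "htgt D (csrc D \<phi>) = vdom D (cright D \<phi>)"
  "hsrc D (ctgt D \<phi>) = vcod D (cleft D \<phi>)" "htgt D (ctgt D \<phi>) = vcod D (cright D \<phi>)"
  using cell_bdry by blast+

lemma vcomp_vid_left [simp]: "vcod D f = A \<Longrightarrow> vcomp D (vid D A) f = f"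
  using vcomp_idl by auto

lemma vcomp_vid_right [simp]: "vdom D f = A \<Longrightarrow> vcomp D f (vid D A) = f"
  using vcomp_idr by auto

declare vid_dom [simp] vid_cod [simp] hunit_src [simp] hunit_tgt [simp]
declare vcomp_dom [simp] vcomp_cod [simp] hcomp_src [simp] hcomp_tgt [simp]

lemma iso_cell_cancel_right:
  assumes "iso_cell D u" "csrc D x = ctgt D u" "csrc D y = ctgt D u" "x \<cdot> u = y \<cdot> u"
  shows "x = y"
proof -
  obtain v where v: "csrc D v = ctgt D u" "ctgt D v = csrc D u" "u \<cdot> v = cid D (ctgt D u)"
    using assms(1) unfolding iso_cell_def by blast
  have "x = x \<cdot> (u \<cdot> v)" using ccomp_idr[of x] v assms by simp
  also have "\<dots> = (x \<cdot> u) \<cdot> v" using ccomp_assoc[of v u x] v assms by simp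
  also have "\<dots> = (y \<cdot> u) \<cdot> v" using assms by simp
  also have "\<dots> = y \<cdot> (u \<cdot> v)" using ccomp_assoc[of v u y] v assms by simp
  also have "\<dots> = y" using ccomp_idr[of y] v assms by simp
  finally show ?thesis .
qed

lemma iso_cell_cancel_left:
  assumes "iso_cell D u" "ctgt D x = csrc D u" "ctgt D y = csrc D u" "u \<cdot> x = u \<cdot> y"
  shows "x = y"
proof -
  obtain v where v: "csrc D v = ctgt D u" "ctgt D v = csrc D u" "v \<cdot> u = cid D (csrc D u)"
    using assms(1) unfolding iso_cell_def by blast
  have "x = (v \<cdot> u) \<cdot> x" using ccomp_idl[of x] v assms by simp
  also have "\<dots> = v \<cdot> (u \<cdot> x)" using ccomp_assoc[of x u v] v assms by simp
  also have "\<dots> = v \<cdot> (u \<cdot> y)" using assms by simp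
  also have "\<dots> = (v \<cdot> u) \<cdot> y" using ccomp_assoc[of y u v] v assms by simp
  also have "\<dots> = y" using ccomp_idl[of y] v assms by simp
  finally show ?thesis .
qed

lemma iso_cell_inverse_globular:
  assumes "iso_cell D u" "cleft D u = vid D X" "cright D u = vid D Y"
  obtains v where "csrc D v = ctgt D u" "ctgt D v = csrc D u"
    "v \<cdot> u = cid D (csrc D u)" "u \<cdot> v = cid D (ctgt D u)"
    "cleft D v = vid D X" "cright D v = vid D Y"
proof -
  obtain v where v: "csrc D v = ctgt D u" "ctgt D v = csrc D u" "v \<cdot> u = cid D (csrc D u)"
    "u \<cdot> v = cid D (ctgt D u)" using assms(1) unfolding iso_cell_def by blast
  have "vcomp D (cleft D v) (vid D X) = vid D X"
    using arg_cong[OF v(3), of "cleft D"] v(1)[symmetric] assms by simp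
  moreover have "vdom D (cleft D v) = X"
    using v assms cell_bdry_simps(1)[of v] cell_bdry_simps(3)[of u] by simp
  ultimately have "cleft D v = vid D X" by simp
  moreover have "vcomp D (cright D v) (vid D Y) = vid D Y"
    using arg_cong[OF v(3), of "cright D"] v(1)[symmetric] assms by simp
  moreover have "vdom D (cright D v) = Y"
    using v assms cell_bdry_simps(2)[of v] cell_bdry_simps(4)[of u] by simp
  ultimately show thesis using that v by simp
qed

lemma iso_cell_cid: "iso_cell D (cid D J)"
  unfolding iso_cell_def using ccomp_idl[of "cid D J"] by (intro exI[of _ "cid D J"]) simp

lemma iso_cell_chcomp:
  assumes "iso_cell D u" "iso_cell D w" "cleft D u = vid D X" "cright D u = vid D Y"
    "cleft D w = vid D Y" "cright D w = vid D Z"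
  shows "iso_cell D (u \<odot> w)"
proof -
  obtain v where v: "csrc D v = ctgt D u" "ctgt D v = csrc D u" "v \<cdot> u = cid D (csrc D u)"
    "u \<cdot> v = cid D (ctgt D u)" "cleft D v = vid D X" "cright D v = vid D Y"
    using iso_cell_inverse_globular[OF assms(1,3,4)] by blast
  obtain v' where v': "csrc D v' = ctgt D w" "ctgt D v' = csrc D w" "v' \<cdot> w = cid D (csrc D w)"
    "w \<cdot> v' = cid D (ctgt D w)" "cleft D v' = vid D Y" "cright D v' = vid D Z"
    using iso_cell_inverse_globular[OF assms(2,5,6)] by blast
  have "(v \<odot> v') \<cdot> (u \<odot> w) = cid D (csrc D (u \<odot> w))"
    using interchange[of u v w v'] v v' assms chcomp_id[of "csrc D u" "csrc D w"] by simp
  moreover have "(u \<odot> w) \<cdot> (v \<odot> v') = cid D (ctgt D (u \<odot> w))"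
    using interchange[of v u v' w] v v' assms chcomp_id[of "ctgt D u" "ctgt D w"] by simp
  ultimately show ?thesis unfolding iso_cell_def using v v' assms
    by (intro exI[of _ "v \<odot> v'"]) simp
qed

subsection \<open>Unit coherence\<close>

lemma hcomp_cid_hunit_cancel:
  assumes "cleft D f = vid D A" "cleft D g = vid D A" "csrc D f = csrc D g" "ctgt D f = ctgt D g"
    "cid D (hunit D A) \<odot> f = cid D (hunit D A) \<odot> g"
  shows "f = g"
proof -
  have "f \<cdot> lunitor D (csrc D f) = g \<cdot> lunitor D (csrc D f)"
    using lunitor_nat[of f] lunitor_nat[of g] assms cunit_id[of A] by simp
  thus ?thesis using iso_cell_cancel_right[OF lunitor_iso] assms by simp
qed

lemma lunitor_hcomp_hunit:
  "lunitor D (hcomp D (hunit D m) (hunit D m)) = cid D (hunit D m) \<odot> lunitor D (hunit D m)"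
proof -
  have "lunitor D (hunit D m) \<cdot> (cid D (hunit D m) \<odot> lunitor D (hunit D m))
     = lunitor D (hunit D m) \<cdot> lunitor D (hcomp D (hunit D m) (hunit D m))"
    using lunitor_nat[of "lunitor D (hunit D m)"] cunit_id[of m] by simp
  from this[symmetric] show ?thesis
    by (rule iso_cell_cancel_left[OF lunitor_iso[of "hunit D m"], rotated -1]) simp_all
qed

text \<open>Kelly's argument: the pentagon and the triangle for four, resp. three, copies of the
  unit, whiskered and cancelled, yield the unit instance of the left-unitor triangle.\<close>

lemma lunitor_hunit_assoc:
  "lunitor D (hcomp D (hunit D m) (hunit D m)) \<cdot> assoc D (hunit D m) (hunit D m) (hunit D m)
   = lunitor D (hunit D m) \<odot> cid D (hunit D m)"
proof -
  let ?I = "hunit D m"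
  let ?II = "hcomp D ?I ?I"
  let ?a = "assoc D ?I ?I ?I"
  let ?one = "cid D ?I"
  let ?l = "lunitor D ?I"
  let ?r = "runitor D ?I"
  let ?lII = "lunitor D ?II"
  let ?b = "assoc D ?I ?II ?I"
  let ?c = "?a \<odot> ?one"
  have pent: "assoc D ?I ?I ?II \<cdot> assoc D ?II ?I ?I = (?one \<odot> ?a) \<cdot> (?b \<cdot> ?c)"
    using pentagon[of ?I ?I ?I ?I] by simp
  have tri_II: "(?one \<odot> ?lII) \<cdot> assoc D ?I ?I ?II = ?r \<odot> cid D ?II"
    using triangle[of ?I ?II] by simp
  have tri_I: "(?one \<odot> ?l) \<cdot> ?a = ?r \<odot> ?one"
    using triangle[of ?I ?I] by simp
  have nat_r: "?a \<cdot> ((?r \<odot> ?one) \<odot> ?one) = (?r \<odot> cid D ?II) \<cdot> assoc D ?II ?I ?I"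
    using assoc_nat[of ?r ?one ?one] chcomp_id[of ?I ?I] by simp
  have nat_l: "?a \<cdot> ((?one \<odot> ?l) \<odot> ?one) = (?one \<odot> (?l \<odot> ?one)) \<cdot> ?b"
    using assoc_nat[of ?one ?l ?one] by simp
  have whisker: "((?one \<odot> ?l) \<cdot> ?a) \<odot> ?one = ((?one \<odot> ?l) \<odot> ?one) \<cdot> ?c"
    using interchange[of ?a "?one \<odot> ?l" ?one ?one] ccomp_idl[of ?one] by simp
  have "(((?one \<odot> ?lII) \<cdot> (?one \<odot> ?a)) \<cdot> ?b) \<cdot> ?c = (?one \<odot> ?lII) \<cdot> ((?one \<odot> ?a) \<cdot> (?b \<cdot> ?c))"
    by (simp add: ccomp_assoc)
  also have "\<dots> = (?one \<odot> ?lII) \<cdot> (assoc D ?I ?I ?II \<cdot> assoc D ?II ?I ?I)" using pent by simp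
  also have "\<dots> = ((?one \<odot> ?lII) \<cdot> assoc D ?I ?I ?II) \<cdot> assoc D ?II ?I ?I"
    by (simp add: ccomp_assoc)
  also have "\<dots> = ?a \<cdot> ((?r \<odot> ?one) \<odot> ?one)" using tri_II nat_r by simp
  also have "\<dots> = ?a \<cdot> (((?one \<odot> ?l) \<odot> ?one) \<cdot> ?c)" using tri_I whisker by simp
  also have "\<dots> = (?a \<cdot> ((?one \<odot> ?l) \<odot> ?one)) \<cdot> ?c" by (simp add: ccomp_assoc)
  also have "\<dots> = ((?one \<odot> (?l \<odot> ?one)) \<cdot> ?b) \<cdot> ?c" using nat_l by simp
  finally have E: "(((?one \<odot> ?lII) \<cdot> (?one \<odot> ?a)) \<cdot> ?b) \<cdot> ?c = ((?one \<odot> (?l \<odot> ?one)) \<cdot> ?b) \<cdot> ?c" .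
  have "iso_cell D ?c" by (rule iso_cell_chcomp[OF assoc_iso iso_cell_cid]) simp_all
  then have E2: "((?one \<odot> ?lII) \<cdot> (?one \<odot> ?a)) \<cdot> ?b = (?one \<odot> (?l \<odot> ?one)) \<cdot> ?b"
    by (rule iso_cell_cancel_right) (use E in simp_all)
  have E3: "(?one \<odot> ?lII) \<cdot> (?one \<odot> ?a) = ?one \<odot> (?l \<odot> ?one)"
    by (rule iso_cell_cancel_right[OF assoc_iso[of ?I ?II ?I]]) (use E2 in simp_all)
  have E4: "(?one \<odot> ?lII) \<cdot> (?one \<odot> ?a) = ?one \<odot> (?lII \<cdot> ?a)"
    using interchange[of ?one ?one ?a ?lII] ccomp_idl[of ?one] by simp
  show ?thesis
    by (rule hcomp_cid_hunit_cancel[of _ m]) (use E3 E4 in simp_all)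
qed

lemma lunitor_hunit_chcomp_cid:
  "lunitor D (hunit D m) \<odot> cid D (hunit D m)
   = (cid D (hunit D m) \<odot> lunitor D (hunit D m)) \<cdot> assoc D (hunit D m) (hunit D m) (hunit D m)"
  using lunitor_hunit_assoc[of m] lunitor_hcomp_hunit[of m] by simp

lemma lunitor_hunit_eq_runitor: "lunitor D (hunit D m) = runitor D (hunit D m)"
proof -
  let ?I = "hunit D m"
  have "(cid D ?I \<odot> lunitor D ?I) \<cdot> assoc D ?I ?I ?I = runitor D ?I \<odot> cid D ?I"
    using triangle[of ?I ?I] by simp
  hence "lunitor D ?I \<odot> cid D ?I = runitor D ?I \<odot> cid D ?I"
    using lunitor_hunit_chcomp_cid[of m] by simp
  hence "lunitor D ?I \<cdot> runitor D (hcomp D ?I ?I) = runitor D ?I \<cdot> runitor D (hcomp D ?I ?I)"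
    using runitor_nat[of "lunitor D ?I"] runitor_nat[of "runitor D ?I"] cunit_id[of m] by simp
  thus ?thesis by (rule iso_cell_cancel_right[OF runitor_iso, rotated -1]) simp_all
qed

subsection \<open>Pasting cells into a horizontal unit\<close>

text \<open>The composite in which the Kan conditions of the definitions are phrased.\<close>

abbreviation paste :: "'o \<Rightarrow> 'c \<Rightarrow> 'c \<Rightarrow> 'c" where
  "paste m \<alpha> \<beta> \<equiv> lunitor D (hunit D m) \<cdot> (\<alpha> \<odot> \<beta>)"

lemma paste_assoc:
  assumes "ctgt D \<alpha> = hunit D m" "ctgt D \<beta> = hunit D m" "ctgt D \<beta>' = hunit D m"
    "cright D \<alpha> = cleft D \<beta>" "cright D \<beta> = cleft D \<beta>'"
  shows "paste m (paste m \<alpha> \<beta>) \<beta>'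
    = paste m \<alpha> (paste m \<beta> \<beta>') \<cdot> assoc D (csrc D \<alpha>) (csrc D \<beta>) (csrc D \<beta>')"
proof -
  let ?l = "lunitor D (hunit D m)"
  let ?one = "cid D (hunit D m)"
  let ?a = "assoc D (hunit D m) (hunit D m) (hunit D m)"
  let ?X = "(\<alpha> \<odot> \<beta>) \<odot> \<beta>'"
  have whisker: "paste m \<alpha> \<beta> \<odot> \<beta>' = (?l \<odot> ?one) \<cdot> ?X"
    using interchange[of "\<alpha> \<odot> \<beta>" ?l \<beta>' ?one] ccomp_idl[of \<beta>'] assms by simp
  have nat: "?a \<cdot> ?X = (\<alpha> \<odot> (\<beta> \<odot> \<beta>')) \<cdot> assoc D (csrc D \<alpha>) (csrc D \<beta>) (csrc D \<beta>')"
    using assoc_nat[of \<alpha> \<beta> \<beta>'] assms by simp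
  have whisker': "(?one \<odot> ?l) \<cdot> (\<alpha> \<odot> (\<beta> \<odot> \<beta>')) = \<alpha> \<odot> paste m \<beta> \<beta>'"
    using interchange[of \<alpha> ?one "\<beta> \<odot> \<beta>'" ?l] ccomp_idl[of \<alpha>] assms by simp
  have "paste m (paste m \<alpha> \<beta>) \<beta>' = ?l \<cdot> (((?one \<odot> ?l) \<cdot> ?a) \<cdot> ?X)"
    using whisker lunitor_hunit_chcomp_cid[of m] by simp
  also have "\<dots> = (?l \<cdot> (?one \<odot> ?l)) \<cdot> (?a \<cdot> ?X)"
    using assms by (simp add: ccomp_assoc)
  also have "\<dots> = (?l \<cdot> (?one \<odot> ?l)) \<cdot> ((\<alpha> \<odot> (\<beta> \<odot> \<beta>')) \<cdot> assoc D (csrc D \<alpha>) (csrc D \<beta>) (csrc D \<beta>'))"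
    using nat by simp
  also have "\<dots> = (?l \<cdot> ((?one \<odot> ?l) \<cdot> (\<alpha> \<odot> (\<beta> \<odot> \<beta>')))) \<cdot> assoc D (csrc D \<alpha>) (csrc D \<beta>) (csrc D \<beta>')"
    using assms by (simp add: ccomp_assoc)
  also have "\<dots> = paste m \<alpha> (paste m \<beta> \<beta>') \<cdot> assoc D (csrc D \<alpha>) (csrc D \<beta>) (csrc D \<beta>')"
    using whisker' by simp
  finally show ?thesis .
qed

lemma paste_ccomp_left:
  assumes "ctgt D \<alpha> = hunit D m" "ctgt D \<beta> = hunit D m" "cright D \<alpha> = cleft D \<beta>"
    "csrc D \<beta> = K" "ctgt D \<gamma> = csrc D \<alpha>" "cright D \<gamma> = vid D (hsrc D K)"
  shows "paste m \<alpha> \<beta> \<cdot> (\<gamma> \<odot> cid D K) = paste m (\<alpha> \<cdot> \<gamma>) \<beta>"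
proof -
  have "(\<alpha> \<cdot> \<gamma>) \<odot> \<beta> = (\<alpha> \<odot> \<beta>) \<cdot> (\<gamma> \<odot> cid D K)"
    using interchange[of \<gamma> \<alpha> "cid D K" \<beta>] ccomp_idr[of \<beta>] assms by simp
  thus ?thesis
    using assms ccomp_assoc[of "\<gamma> \<odot> cid D K" "\<alpha> \<odot> \<beta>" "lunitor D (hunit D m)"] by simp
qed

lemma paste_cunit_right:
  assumes "ctgt D \<zeta> = hunit D m"
  shows "\<zeta> \<cdot> runitor D (csrc D \<zeta>) = paste m \<zeta> (cunit D (cright D \<zeta>))"
  using runitor_nat[of \<zeta>] lunitor_hunit_eq_runitor[of m] assms by simp

lemma paste_cunit_left:
  assumes "ctgt D \<psi> = hunit D m"
  shows "paste m (cunit D (cleft D \<psi>)) \<psi> = \<psi> \<cdot> lunitor D (csrc D \<psi>)"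
  using lunitor_nat[of \<psi>] assms by simp

lemma paste_naturality:
  assumes "csrc D \<zeta>1 = J" "ctgt D \<zeta>1 = hunit D m" "csrc D \<zeta>2 = J" "ctgt D \<zeta>2 = hunit D m"
    "cright D \<zeta>2 = cleft D \<nu>" "csrc D \<nu> = hunit D (htgt D J)" "ctgt D \<nu> = hunit D m"
    "\<zeta>1 \<cdot> runitor D J = paste m \<zeta>2 \<nu>"
    "ctgt D \<chi> = J" "cright D \<chi> = k" "vcod D k = htgt D J"
  shows "(\<zeta>1 \<cdot> \<chi>) \<cdot> runitor D (csrc D \<chi>) = paste m (\<zeta>2 \<cdot> \<chi>) (\<nu> \<cdot> cunit D k)"
proof -
  have nat: "\<chi> \<cdot> runitor D (csrc D \<chi>) = runitor D J \<cdot> (\<chi> \<odot> cunit D k)"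
    using runitor_nat[of \<chi>] assms by simp
  have "(\<zeta>1 \<cdot> \<chi>) \<cdot> runitor D (csrc D \<chi>) = \<zeta>1 \<cdot> (\<chi> \<cdot> runitor D (csrc D \<chi>))"
    using assms ccomp_assoc[of "runitor D (csrc D \<chi>)" \<chi> \<zeta>1] by simp
  also have "\<dots> = (\<zeta>1 \<cdot> runitor D J) \<cdot> (\<chi> \<odot> cunit D k)"
    using nat assms ccomp_assoc[of "\<chi> \<odot> cunit D k" "runitor D J" \<zeta>1] by simp
  also have "\<dots> = lunitor D (hunit D m) \<cdot> ((\<zeta>2 \<odot> \<nu>) \<cdot> (\<chi> \<odot> cunit D k))"
    using assms ccomp_assoc[of "\<chi> \<odot> cunit D k" "\<zeta>2 \<odot> \<nu>" "lunitor D (hunit D m)"] by simp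
  also have "(\<zeta>2 \<odot> \<nu>) \<cdot> (\<chi> \<odot> cunit D k) = (\<zeta>2 \<cdot> \<chi>) \<odot> (\<nu> \<cdot> cunit D k)"
    using interchange[of \<chi> \<zeta>2 "cunit D k" \<nu>] assms by simp
  finally show ?thesis .
qed

lemma paste_factor:
  assumes "csrc D \<zeta>1 = J" "ctgt D \<zeta>1 = hunit D m" "csrc D \<zeta>2 = J" "ctgt D \<zeta>2 = hunit D m"
    "cright D \<zeta>2 = cleft D \<nu>" "csrc D \<nu> = hunit D (htgt D J)" "ctgt D \<nu> = hunit D m"
    "cright D \<nu> = cright D \<zeta>1"
    "\<zeta>1 \<cdot> runitor D J = paste m \<zeta>2 \<nu>"
    "csrc D \<psi> = H" "ctgt D \<psi> = hunit D m" "cleft D \<psi> = cright D \<zeta>1" "hsrc D H = htgt D J"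
    "csrc D v = H" "ctgt D v = hcomp D (hunit D (htgt D J)) H" "lunitor D H \<cdot> v = cid D H"
    "cleft D v = vid D (htgt D J)" "cright D v = vid D (htgt D H)"
  shows "paste m \<zeta>1 \<psi> = paste m \<zeta>2 (paste m \<nu> \<psi> \<cdot> v)"
proof -
  let ?lam = "lunitor D (hunit D m)"
  let ?U = "hunit D (htgt D J)"
  let ?Q = "paste m \<nu> \<psi>"
  have "vcod D (cleft D \<nu>) = m" "vcod D (cright D \<psi>) = m"
    using cell_bdry_simps(3)[of \<nu>] cell_bdry_simps(4)[of \<psi>] assms by simp_all
  note c = assms this
  have "paste m \<zeta>1 \<psi> \<cdot> (runitor D J \<odot> cid D H) = paste m (paste m \<zeta>2 \<nu>) \<psi>"
    using paste_ccomp_left[of \<zeta>1 m \<psi> H "runitor D J"] c by simp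
  also have "\<dots> = paste m \<zeta>2 ?Q \<cdot> assoc D J ?U H"
    using paste_assoc[of \<zeta>2 m \<nu> \<psi>] c by simp
  finally have "(paste m \<zeta>1 \<psi> \<cdot> (cid D J \<odot> lunitor D H)) \<cdot> assoc D J ?U H
      = paste m \<zeta>2 ?Q \<cdot> assoc D J ?U H"
    using triangle[of J H] c
      ccomp_assoc[of "assoc D J ?U H" "cid D J \<odot> lunitor D H" "paste m \<zeta>1 \<psi>"] by simp
  then have unfold: "paste m \<zeta>1 \<psi> \<cdot> (cid D J \<odot> lunitor D H) = paste m \<zeta>2 ?Q"
    by (rule iso_cell_cancel_right[OF assoc_iso[of J ?U H], rotated -1]) (use c in simp_all)
  have split: "\<zeta>2 \<odot> (?Q \<cdot> v) = (\<zeta>2 \<odot> ?Q) \<cdot> (cid D J \<odot> v)"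
    using interchange[of "cid D J" \<zeta>2 v ?Q] ccomp_idr[of \<zeta>2] c by simp
  have inv: "(cid D J \<odot> lunitor D H) \<cdot> (cid D J \<odot> v) = cid D (hcomp D J H)"
    using interchange[of "cid D J" "cid D J" v "lunitor D H"] ccomp_idl[of "cid D J"] c
      chcomp_id[of J H] by simp
  have "paste m \<zeta>2 (?Q \<cdot> v) = paste m \<zeta>2 ?Q \<cdot> (cid D J \<odot> v)"
    using split c ccomp_assoc[of "cid D J \<odot> v" "\<zeta>2 \<odot> ?Q" ?lam] by simp
  also have "\<dots> = paste m \<zeta>1 \<psi> \<cdot> ((cid D J \<odot> lunitor D H) \<cdot> (cid D J \<odot> v))"
    using unfold c ccomp_assoc[of "cid D J \<odot> v" "cid D J \<odot> lunitor D H" "paste m \<zeta>1 \<psi>"] by simp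
  also have "\<dots> = paste m \<zeta>1 \<psi>" using inv ccomp_idr[of "paste m \<zeta>1 \<psi>"] c by simp
  finally show ?thesis by simp
qed

lemma vertical_cell_sides:
  assumes "vertical_cell D \<nu> f g"
  shows "vdom D g = vdom D f" "vcod D g = vcod D f"
  using assms cell_bdry_simps(2,4)[of \<nu>] unfolding vertical_cell_def is_cell_def by simp_all

lemma paste_retraction_left:
  assumes \<alpha>: "vertical_cell D \<alpha> f g" and \<beta>: "vertical_cell D \<beta> g f"
    and retr: "paste m \<alpha> \<beta> = cunit D f \<cdot> lunitor D (hunit D (vdom D f))"
    and \<psi>: "ctgt D \<psi> = hunit D m" "cright D \<psi> = f"
  shows "paste m (paste m \<psi> \<alpha>) \<beta>
    = (\<psi> \<cdot> runitor D (csrc D \<psi>)) \<cdot> (runitor D (csrc D \<psi>) \<odot> cid D (hunit D (vdom D f)))"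
proof -
  let ?H = "csrc D \<psi>" and ?U = "hunit D (vdom D f)"
  have m: "vcod D f = m" using cell_bdry_simps(4)[of \<psi>] \<psi> by simp
  note c = \<alpha>[unfolded vertical_cell_def is_cell_def] \<beta>[unfolded vertical_cell_def is_cell_def]
    vertical_cell_sides[OF \<alpha>] \<psi> m
  have "paste m \<psi> (cunit D f \<cdot> lunitor D ?U) = paste m \<psi> (cunit D f) \<cdot> (cid D ?H \<odot> lunitor D ?U)"
    using interchange[of "cid D ?H" \<psi> "lunitor D ?U" "cunit D f"] ccomp_idr[of \<psi>] c
      ccomp_assoc[of "cid D ?H \<odot> lunitor D ?U" "\<psi> \<odot> cunit D f" "lunitor D (hunit D m)"] by simp
  also have "\<dots> = (\<psi> \<cdot> runitor D ?H) \<cdot> (cid D ?H \<odot> lunitor D ?U)"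
    using paste_cunit_right[of \<psi> m] c by simp
  finally have "paste m (paste m \<psi> \<alpha>) \<beta>
      = ((\<psi> \<cdot> runitor D ?H) \<cdot> (cid D ?H \<odot> lunitor D ?U)) \<cdot> assoc D ?H ?U ?U"
    using paste_assoc[of \<psi> m \<alpha> \<beta>] retr c by simp
  also have "\<dots> = (\<psi> \<cdot> runitor D ?H) \<cdot> (runitor D ?H \<odot> cid D ?U)"
    using triangle[of ?H ?U] c
      ccomp_assoc[of "assoc D ?H ?U ?U" "cid D ?H \<odot> lunitor D ?U" "\<psi> \<cdot> runitor D ?H"] by simp
  finally show ?thesis .
qed

lemma paste_retraction_right:
  assumes \<alpha>: "vertical_cell D \<alpha> f g" and \<beta>: "vertical_cell D \<beta> g f"
    and retr: "paste m \<alpha> \<beta> = cunit D f \<cdot> lunitor D (hunit D (vdom D f))"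
    and \<psi>: "ctgt D \<psi> = hunit D m" "cleft D \<psi> = f"
  shows "paste m \<alpha> (paste m \<beta> \<psi>) \<cdot> assoc D (hunit D (vdom D f)) (hunit D (vdom D f)) (csrc D \<psi>)
    = (\<psi> \<cdot> lunitor D (csrc D \<psi>)) \<cdot> (lunitor D (hunit D (vdom D f)) \<odot> cid D (csrc D \<psi>))"
proof -
  let ?H = "csrc D \<psi>" and ?U = "hunit D (vdom D f)"
  have m: "vcod D f = m" using cell_bdry_simps(3)[of \<psi>] \<psi> by simp
  note c = \<alpha>[unfolded vertical_cell_def is_cell_def] \<beta>[unfolded vertical_cell_def is_cell_def]
    vertical_cell_sides[OF \<alpha>] \<psi> m
  have "paste m \<alpha> (paste m \<beta> \<psi>) \<cdot> assoc D ?U ?U ?H = paste m (cunit D f \<cdot> lunitor D ?U) \<psi>"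
    using paste_assoc[of \<alpha> m \<beta> \<psi>] retr c by simp
  also have "\<dots> = paste m (cunit D f) \<psi> \<cdot> (lunitor D ?U \<odot> cid D ?H)"
    using paste_ccomp_left[of "cunit D f" m \<psi> ?H "lunitor D ?U"] c by simp
  also have "\<dots> = (\<psi> \<cdot> lunitor D ?H) \<cdot> (lunitor D ?U \<odot> cid D ?H)"
    using paste_cunit_left[of \<psi> m] c by simp
  finally show ?thesis .
qed

lemma paste_retraction_cancel:
  assumes \<alpha>: "vertical_cell D \<alpha> f g" and \<beta>: "vertical_cell D \<beta> g f"
    and retr: "paste m \<alpha> \<beta> = cunit D f \<cdot> lunitor D (hunit D (vdom D f))"
    and \<psi>: "is_cell D \<psi> H (hunit D m) f k" and \<psi>': "is_cell D \<psi>' H (hunit D m) f k"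
    and eq: "paste m \<beta> \<psi> = paste m \<beta> \<psi>'"
  shows "\<psi> = \<psi>'"
proof -
  let ?U = "hunit D (vdom D f)"
  note c = \<psi>[unfolded is_cell_def] \<psi>'[unfolded is_cell_def] cell_bdry_simps(1)[of \<psi>]
  have "(\<psi> \<cdot> lunitor D H) \<cdot> (lunitor D ?U \<odot> cid D H) = (\<psi>' \<cdot> lunitor D H) \<cdot> (lunitor D ?U \<odot> cid D H)"
    using paste_retraction_right[OF \<alpha> \<beta> retr, of \<psi>] paste_retraction_right[OF \<alpha> \<beta> retr, of \<psi>']
      eq c by simp
  moreover have "iso_cell D (lunitor D ?U \<odot> cid D H)"
    by (rule iso_cell_chcomp[OF lunitor_iso iso_cell_cid]) (use c in simp_all)
  ultimately have "\<psi> \<cdot> lunitor D H = \<psi>' \<cdot> lunitor D H"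
    by (rule iso_cell_cancel_right[rotated 3]) (use c in simp_all)
  then show ?thesis
    by (rule iso_cell_cancel_right[OF lunitor_iso[of H], rotated -1]) (use c in simp_all)
qed

lemma paste_retraction_ccomp_cunit:
  assumes \<alpha>: "vertical_cell D \<alpha> f g" and \<beta>: "vertical_cell D \<beta> g f"
    and retr: "paste m \<alpha> \<beta> = cunit D f \<cdot> lunitor D (hunit D (vdom D f))"
    and m: "vcod D f = m" and k: "vcod D k = vdom D f"
  shows "paste m (\<alpha> \<cdot> cunit D k) (\<beta> \<cdot> cunit D k)
    = cunit D (vcomp D f k) \<cdot> lunitor D (hunit D (vdom D k))"
proof -
  let ?U = "hunit D (vdom D f)" and ?kk = "cunit D k \<odot> cunit D k"
  note c = \<alpha>[unfolded vertical_cell_def is_cell_def] \<beta>[unfolded vertical_cell_def is_cell_def]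
    vertical_cell_sides[OF \<alpha>] m k
  have "(\<alpha> \<cdot> cunit D k) \<odot> (\<beta> \<cdot> cunit D k) = (\<alpha> \<odot> \<beta>) \<cdot> ?kk"
    using interchange[of "cunit D k" \<alpha> "cunit D k" \<beta>] c by simp
  hence "paste m (\<alpha> \<cdot> cunit D k) (\<beta> \<cdot> cunit D k) = paste m \<alpha> \<beta> \<cdot> ?kk"
    using c ccomp_assoc[of ?kk "\<alpha> \<odot> \<beta>" "lunitor D (hunit D m)"] by simp
  also have "\<dots> = cunit D f \<cdot> (lunitor D ?U \<cdot> ?kk)"
    using retr c ccomp_assoc[of ?kk "lunitor D ?U" "cunit D f"] by simp
  also have "lunitor D ?U \<cdot> ?kk = cunit D k \<cdot> lunitor D (hunit D (vdom D k))"
    using lunitor_nat[of "cunit D k"] c by simp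
  also have "cunit D f \<cdot> (cunit D k \<cdot> lunitor D (hunit D (vdom D k)))
      = cunit D (vcomp D f k) \<cdot> lunitor D (hunit D (vdom D k))"
    using c ccomp_assoc[of "lunitor D (hunit D (vdom D k))" "cunit D k" "cunit D f"]
      cunit_comp[of k f] by simp
  finally show ?thesis .
qed

lemma vertical_cell_ccomp_cunit:
  assumes "vertical_cell D \<nu> f g" "vcod D k = vdom D f"
  shows "vertical_cell D (\<nu> \<cdot> cunit D k) (vcomp D f k) (vcomp D g k)"
  using assms vertical_cell_sides[OF assms(1)] unfolding vertical_cell_def is_cell_def by simp

subsection \<open>Comparison of two left Kan extensions\<close>

lemma left_kan_comparison:
  assumes \<eta>: "left_kan D \<eta> J d l" and \<phi>: "left_kan D \<phi> J d g"
  obtains \<nu> \<nu>' where "vertical_cell D \<nu> l g" "vertical_cell D \<nu>' g l"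
    "\<phi> \<cdot> runitor D J = paste (vcod D d) \<eta> \<nu>" "\<eta> \<cdot> runitor D J = paste (vcod D d) \<phi> \<nu>'"
    "paste (vcod D d) \<nu> \<nu>' = cunit D l \<cdot> lunitor D (hunit D (vdom D l))"
proof -
  let ?m = "vcod D d" and ?U = "hunit D (htgt D J)"
  have \<eta>c: "is_cell D \<eta> J (hunit D ?m) d l" and \<phi>c: "is_cell D \<phi> J (hunit D ?m) d g"
    using \<eta> \<phi> unfolding left_kan_def by simp_all
  obtain \<nu> where \<nu>: "vertical_cell D \<nu> l g" "\<phi> \<cdot> runitor D J = paste ?m \<eta> \<nu>"
    using \<eta> \<phi>c unfolding left_kan_def by blast
  obtain \<nu>' where \<nu>': "vertical_cell D \<nu>' g l" "\<eta> \<cdot> runitor D J = paste ?m \<phi> \<nu>'"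
    using \<phi> \<eta>c unfolding left_kan_def by blast
  have l: "vdom D l = htgt D J" "vcod D l = ?m"
    using \<eta>c cell_bdry_simps(2,4)[of \<eta>] unfolding is_cell_def by simp_all
  obtain v where v: "csrc D v = ?U" "ctgt D v = hcomp D ?U ?U" "v \<cdot> lunitor D ?U = cid D (hcomp D ?U ?U)"
    "lunitor D ?U \<cdot> v = cid D ?U" "cleft D v = vid D (htgt D J)" "cright D v = vid D (htgt D J)"
    using iso_cell_inverse_globular[OF lunitor_iso, of ?U "htgt D J" "htgt D J"] by auto
  let ?Q = "paste ?m \<nu> \<nu>'"
  note c = \<eta>c[unfolded is_cell_def] \<phi>c[unfolded is_cell_def] l
    \<nu>(1)[unfolded vertical_cell_def is_cell_def] \<nu>'(1)[unfolded vertical_cell_def is_cell_def]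
    vertical_cell_sides[OF \<nu>(1)]
  have "\<eta> \<cdot> runitor D J = paste ?m \<eta> (?Q \<cdot> v)"
    using \<nu>'(2) paste_factor[of \<phi> J ?m \<eta> \<nu> \<nu>' ?U v] \<nu>(2) c v by simp
  moreover have "\<eta> \<cdot> runitor D J = paste ?m \<eta> (cunit D l)"
    using paste_cunit_right[of \<eta> ?m] c by simp
  moreover have "vertical_cell D (?Q \<cdot> v) l l" "vertical_cell D (cunit D l) l l"
    using c v unfolding vertical_cell_def is_cell_def by simp_all
  ultimately have "?Q \<cdot> v = cunit D l"
    using \<eta> \<eta>c unfolding left_kan_def by blast
  moreover have "?Q = (?Q \<cdot> v) \<cdot> lunitor D ?U"
    using v c ccomp_idr[of ?Q] ccomp_assoc[of "lunitor D ?U" v ?Q] by simp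
  ultimately show thesis using that \<nu> \<nu>' l by simp
qed

subsection \<open>Transport along a vertical comparison\<close>

lemma cartesian_cancel:
  assumes "cartesian D \<phi>" "is_cell D \<chi> H (csrc D \<phi>) h k" "is_cell D \<chi>' H (csrc D \<phi>) h k"
    "\<phi> \<cdot> \<chi> = \<phi> \<cdot> \<chi>'"
  shows "\<chi> = \<chi>'"
proof -
  have "\<exists>!\<chi>''. is_cell D \<chi>'' (csrc D (\<phi> \<cdot> \<chi>)) (csrc D \<phi>) h k \<and> \<phi> \<cdot> \<chi>'' = \<phi> \<cdot> \<chi>"
    using assms(1)[unfolded cartesian_def, rule_format, of h k "\<phi> \<cdot> \<chi>"] assms(2)
      cell_bdry_simps(3,4)[of \<chi>] unfolding is_cell_def by simp
  then show ?thesis using assms unfolding is_cell_def by auto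
qed

lemma cartesian_factor:
  assumes "cartesian D \<phi>" "ctgt D \<psi> = ctgt D \<phi>"
    "cleft D \<psi> = vcomp D (cleft D \<phi>) h" "cright D \<psi> = vcomp D (cright D \<phi>) k"
    "vcod D h = vdom D (cleft D \<phi>)" "vcod D k = vdom D (cright D \<phi>)"
  obtains \<chi> where "is_cell D \<chi> (csrc D \<psi>) (csrc D \<phi>) h k" "\<phi> \<cdot> \<chi> = \<psi>"
  using assms unfolding cartesian_def by blast

lemma cartesian_transfer_factor:
  assumes \<eta>: "is_cell D \<eta> J (hunit D m) d l" and \<phi>: "is_cell D \<phi> J (hunit D m) d g"
    and cart: "cartesian D \<phi>"
    and \<nu>: "vertical_cell D \<nu> l g" and \<nu>': "vertical_cell D \<nu>' g l"
    and e': "\<eta> \<cdot> runitor D J = paste m \<phi> \<nu>'"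
    and retr: "paste m \<nu> \<nu>' = cunit D l \<cdot> lunitor D (hunit D (vdom D l))"
    and \<psi>: "ctgt D \<psi> = hunit D m" "cleft D \<psi> = vcomp D d h" "cright D \<psi> = vcomp D l k"
    and hk: "vcod D h = vdom D d" "vcod D k = vdom D l"
  obtains \<chi> where "is_cell D \<chi> (csrc D \<psi>) J h k" "\<eta> \<cdot> \<chi> = \<psi>"
proof -
  let ?H = "csrc D \<psi>" and ?U = "hunit D (vdom D k)"
  let ?\<rho> = "runitor D ?H" and ?\<nu>k = "\<nu> \<cdot> cunit D k" and ?\<nu>'k = "\<nu>' \<cdot> cunit D k"
  note c = \<eta>[unfolded is_cell_def] \<phi>[unfolded is_cell_def] \<psi> hk
    \<nu>[unfolded vertical_cell_def is_cell_def] \<nu>'[unfolded vertical_cell_def is_cell_def]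
    vertical_cell_sides[OF \<nu>] cell_bdry_simps(1,2)[of \<psi>] cell_bdry_simps(2,3,4)[of \<eta>]
  obtain \<rho>' where \<rho>': "csrc D \<rho>' = ?H" "ctgt D \<rho>' = hcomp D ?H ?U"
    "\<rho>' \<cdot> ?\<rho> = cid D (hcomp D ?H ?U)" "cleft D \<rho>' = vid D (vdom D h)" "cright D \<rho>' = vid D (vdom D k)"
    using iso_cell_inverse_globular[OF runitor_iso, of ?H "vdom D h" "vdom D k"] c by auto
  let ?t = "paste m \<psi> ?\<nu>k \<cdot> \<rho>'"
  have t: "?t \<cdot> ?\<rho> = paste m \<psi> ?\<nu>k"
    using \<rho>' c ccomp_assoc[of ?\<rho> \<rho>' "paste m \<psi> ?\<nu>k"] ccomp_idr[of "paste m \<psi> ?\<nu>k"] by simp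
  have "csrc D ?t = ?H" "ctgt D ?t = ctgt D \<phi>"
    "cleft D ?t = vcomp D (cleft D \<phi>) h" "cright D ?t = vcomp D (cright D \<phi>) k"
    using \<rho>' c by simp_all
  then obtain \<chi> where \<chi>: "is_cell D \<chi> ?H J h k" "\<phi> \<cdot> \<chi> = ?t"
    using cartesian_factor[OF cart, of ?t h k] c by metis
  note \<chi>c = \<chi>(1)[unfolded is_cell_def]
  have \<nu>k: "vertical_cell D ?\<nu>k (vcomp D l k) (vcomp D g k)"
    and \<nu>'k: "vertical_cell D ?\<nu>'k (vcomp D g k) (vcomp D l k)"
    using vertical_cell_ccomp_cunit[OF \<nu>] vertical_cell_ccomp_cunit[OF \<nu>'] c by simp_all
  have retr_k: "paste m ?\<nu>k ?\<nu>'k = cunit D (vcomp D l k) \<cdot> lunitor D (hunit D (vdom D (vcomp D l k)))"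
    using paste_retraction_ccomp_cunit[OF \<nu> \<nu>' retr] c by simp
  have "((\<eta> \<cdot> \<chi>) \<cdot> ?\<rho>) \<cdot> (?\<rho> \<odot> cid D ?U) = paste m ?t ?\<nu>'k \<cdot> (?\<rho> \<odot> cid D ?U)"
    using paste_naturality[of \<eta> J m \<phi> \<nu>' \<chi> k] e' \<chi> \<chi>c c by simp
  also have "\<dots> = paste m (paste m \<psi> ?\<nu>k) ?\<nu>'k"
    using paste_ccomp_left[of ?t m ?\<nu>'k ?U ?\<rho>] t \<rho>' c by simp
  also have "\<dots> = (\<psi> \<cdot> ?\<rho>) \<cdot> (?\<rho> \<odot> cid D ?U)"
    using paste_retraction_left[OF \<nu>k \<nu>'k retr_k, of \<psi>] c by simp
  finally have "((\<eta> \<cdot> \<chi>) \<cdot> ?\<rho>) \<cdot> (?\<rho> \<odot> cid D ?U) = (\<psi> \<cdot> ?\<rho>) \<cdot> (?\<rho> \<odot> cid D ?U)" .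
  moreover have "iso_cell D (?\<rho> \<odot> cid D ?U)"
    by (rule iso_cell_chcomp[OF runitor_iso iso_cell_cid]) (use c in simp_all)
  ultimately have "(\<eta> \<cdot> \<chi>) \<cdot> ?\<rho> = \<psi> \<cdot> ?\<rho>"
    by (rule iso_cell_cancel_right[rotated 3]) (use c \<chi>c in simp_all)
  then have "\<eta> \<cdot> \<chi> = \<psi>"
    by (rule iso_cell_cancel_right[OF runitor_iso[of ?H], rotated -1]) (use c \<chi>c in simp_all)
  with \<chi>(1) show thesis by (rule that)
qed

lemma cartesian_transfer:
  assumes \<eta>: "is_cell D \<eta> J (hunit D m) d l" and \<phi>: "is_cell D \<phi> J (hunit D m) d g"
    and cart: "cartesian D \<phi>"
    and \<nu>: "vertical_cell D \<nu> l g" and \<nu>': "vertical_cell D \<nu>' g l"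
    and e: "\<phi> \<cdot> runitor D J = paste m \<eta> \<nu>" and e': "\<eta> \<cdot> runitor D J = paste m \<phi> \<nu>'"
    and retr: "paste m \<nu> \<nu>' = cunit D l \<cdot> lunitor D (hunit D (vdom D l))"
  shows "cartesian D \<eta>"
  unfolding cartesian_def
proof (intro allI impI)
  fix \<psi> h k
  assume "vcod D h = vdom D (cleft D \<eta>) \<and> vcod D k = vdom D (cright D \<eta>) \<and> ctgt D \<psi> = ctgt D \<eta> \<and>
    cleft D \<psi> = vcomp D (cleft D \<eta>) h \<and> cright D \<psi> = vcomp D (cright D \<eta>) k"
  then have \<psi>: "ctgt D \<psi> = hunit D m" "cleft D \<psi> = vcomp D d h" "cright D \<psi> = vcomp D l k"
    and hk: "vcod D h = vdom D d" "vcod D k = vdom D l"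
    using \<eta> unfolding is_cell_def by auto
  note c = \<eta>[unfolded is_cell_def] \<phi>[unfolded is_cell_def]
    \<nu>[unfolded vertical_cell_def is_cell_def] cell_bdry_simps(2,4)[of \<eta>]
  have "\<chi> = \<chi>'" if \<chi>: "is_cell D \<chi> (csrc D \<psi>) J h k" "\<eta> \<cdot> \<chi> = \<psi>"
    and \<chi>': "is_cell D \<chi>' (csrc D \<psi>) J h k" "\<eta> \<cdot> \<chi>' = \<psi>" for \<chi> \<chi>'
  proof -
    have "(\<phi> \<cdot> \<chi>) \<cdot> runitor D (csrc D \<psi>) = (\<phi> \<cdot> \<chi>') \<cdot> runitor D (csrc D \<psi>)"
      using paste_naturality[of \<phi> J m \<eta> \<nu> \<chi> k] paste_naturality[of \<phi> J m \<eta> \<nu> \<chi>' k]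
        e \<chi> \<chi>' c hk unfolding is_cell_def by simp
    then have "\<phi> \<cdot> \<chi> = \<phi> \<cdot> \<chi>'"
      by (rule iso_cell_cancel_right[OF runitor_iso, rotated -1]) (use \<chi> \<chi>' c in \<open>simp_all add: is_cell_def\<close>)
    then show ?thesis
      using cartesian_cancel[OF cart, of \<chi> "csrc D \<psi>" h k \<chi>'] \<chi> \<chi>' c by simp
  qed
  moreover obtain \<chi> where "is_cell D \<chi> (csrc D \<psi>) J h k" "\<eta> \<cdot> \<chi> = \<psi>"
    using cartesian_transfer_factor[OF \<eta> \<phi> cart \<nu> \<nu>' e' retr \<psi> hk] by blast
  ultimately show "\<exists>!\<chi>. is_cell D \<chi> (csrc D \<psi>) (csrc D \<eta>) h k \<and> \<eta> \<cdot> \<chi> = \<psi>"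
    using c by blast
qed

lemma pointwise_left_kan_transfer:
  assumes \<phi>: "pointwise_left_kan D \<phi> J d g" and \<eta>: "left_kan D \<eta> J d l"
    and \<nu>: "vertical_cell D \<nu> l g" and \<nu>': "vertical_cell D \<nu>' g l"
    and e: "\<phi> \<cdot> runitor D J = paste (vcod D d) \<eta> \<nu>"
    and e': "\<eta> \<cdot> runitor D J = paste (vcod D d) \<phi> \<nu>'"
    and retr: "paste (vcod D d) \<nu> \<nu>' = cunit D l \<cdot> lunitor D (hunit D (vdom D l))"
  shows "pointwise_left_kan D \<eta> J d l"
  unfolding pointwise_left_kan_def
proof (intro conjI allI impI)
  show "left_kan D \<eta> J d l" by (rule \<eta>)
  let ?m = "vcod D d"
  fix H \<zeta> k
  assume H\<zeta>: "hsrc D H = htgt D J \<and> is_cell D \<zeta> (hcomp D J H) (hunit D ?m) d k"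
  have \<phi>': "\<exists>!\<psi>. is_cell D \<psi> H (hunit D ?m) g k \<and> \<zeta> = paste ?m \<phi> \<psi>"
    using \<phi> H\<zeta> unfolding pointwise_left_kan_def by blast
  have \<eta>c: "is_cell D \<eta> J (hunit D ?m) d l" and \<phi>c: "is_cell D \<phi> J (hunit D ?m) d g"
    using \<eta> \<phi> unfolding pointwise_left_kan_def left_kan_def by simp_all
  note c = \<eta>c[unfolded is_cell_def] \<phi>c[unfolded is_cell_def] H\<zeta>[unfolded is_cell_def]
    \<nu>[unfolded vertical_cell_def is_cell_def] \<nu>'[unfolded vertical_cell_def is_cell_def]
    vertical_cell_sides[OF \<nu>] cell_bdry_simps(2,4)[of \<eta>] cell_bdry_simps(2,4)[of \<zeta>]
  obtain v where v: "csrc D v = H" "ctgt D v = hcomp D (hunit D (htgt D J)) H"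
    "v \<cdot> lunitor D H = cid D (hcomp D (hunit D (htgt D J)) H)" "lunitor D H \<cdot> v = cid D H"
    "cleft D v = vid D (htgt D J)" "cright D v = vid D (htgt D H)"
    using iso_cell_inverse_globular[OF lunitor_iso, of H "htgt D J" "htgt D H"] c by auto
  have through_\<phi>: "paste ?m \<eta> \<psi> = paste ?m \<phi> (paste ?m \<nu>' \<psi> \<cdot> v)"
    if "is_cell D \<psi> H (hunit D ?m) l k" for \<psi>
    using paste_factor[of \<eta> J ?m \<phi> \<nu>' \<psi> H v] e' that c v unfolding is_cell_def by simp
  obtain \<psi> where \<psi>: "is_cell D \<psi> H (hunit D ?m) g k" "\<zeta> = paste ?m \<phi> \<psi>"
    using \<phi>' by blast
  have "is_cell D (paste ?m \<nu> \<psi> \<cdot> v) H (hunit D ?m) l k"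
    "\<zeta> = paste ?m \<eta> (paste ?m \<nu> \<psi> \<cdot> v)"
    using paste_factor[of \<phi> J ?m \<eta> \<nu> \<psi> H v] e \<psi> c v unfolding is_cell_def by simp_all
  moreover have "\<psi>\<^sub>1 = \<psi>\<^sub>2"
    if "is_cell D \<psi>\<^sub>1 H (hunit D ?m) l k" "\<zeta> = paste ?m \<eta> \<psi>\<^sub>1"
      "is_cell D \<psi>\<^sub>2 H (hunit D ?m) l k" "\<zeta> = paste ?m \<eta> \<psi>\<^sub>2" for \<psi>\<^sub>1 \<psi>\<^sub>2
  proof -
    have cell: "is_cell D (paste ?m \<nu>' \<psi> \<cdot> v) H (hunit D ?m) g k"
      if "is_cell D \<psi> H (hunit D ?m) l k" for \<psi>
      using that c v unfolding is_cell_def by simp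
    have "paste ?m \<nu>' \<psi>\<^sub>1 \<cdot> v = paste ?m \<nu>' \<psi>\<^sub>2 \<cdot> v"
      using \<phi>' cell[OF that(1)] cell[OF that(3)] through_\<phi>[OF that(1)] through_\<phi>[OF that(3)] that(2,4)
      by metis
    moreover have "paste ?m \<nu>' \<psi> = (paste ?m \<nu>' \<psi> \<cdot> v) \<cdot> lunitor D H"
      if "is_cell D \<psi> H (hunit D ?m) l k" for \<psi>
      using that c v ccomp_assoc[of "lunitor D H" v "paste ?m \<nu>' \<psi>"] ccomp_idr[of "paste ?m \<nu>' \<psi>"]
      unfolding is_cell_def by simp
    ultimately have "paste ?m \<nu>' \<psi>\<^sub>1 = paste ?m \<nu>' \<psi>\<^sub>2"
      using that(1,3) by metis
    then show ?thesis
      using paste_retraction_cancel[OF \<nu> \<nu>' retr that(1,3)] by blast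
  qed
  ultimately show "\<exists>!\<psi>. is_cell D \<psi> H (hunit D ?m) l k \<and> \<zeta> = paste ?m \<eta> \<psi>"
    by blast
qed

end

theorem lemma6p4:
  fixes D :: "('o,'v,'h,'c) dbl" and y l :: 'v and J :: 'h and \<eta> :: 'c
  assumes "double_category D"
    and "yoneda_embedding D y"
    and "hsrc D J = vdom D y"
    and "left_kan D \<eta> J y l"
  shows "cartesian D \<eta> \<and> pointwise_left_kan D \<eta> J y l"
proof -
  interpret double_category D by fact
  obtain \<phi> g where \<phi>: "is_cell D \<phi> J (hunit D (vcod D y)) y g" "cartesian D \<phi>"
    using assms(2,3) unfolding yoneda_embedding_def by blast
  have pw: "pointwise_left_kan D \<phi> J y g"
    using assms(2) \<phi> unfolding yoneda_embedding_def by blast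
  then have "left_kan D \<phi> J y g" unfolding pointwise_left_kan_def by simp
  with assms(4) obtain \<nu> \<nu>' where \<nu>: "vertical_cell D \<nu> l g" "vertical_cell D \<nu>' g l"
    "\<phi> \<cdot> runitor D J = paste (vcod D y) \<eta> \<nu>" "\<eta> \<cdot> runitor D J = paste (vcod D y) \<phi> \<nu>'"
    "paste (vcod D y) \<nu> \<nu>' = cunit D l \<cdot> lunitor D (hunit D (vdom D l))"
    by (rule left_kan_comparison)
  have "is_cell D \<eta> J (hunit D (vcod D y)) y l"
    using assms(4) unfolding left_kan_def by simp
  then show ?thesis
    using cartesian_transfer[OF _ \<phi> \<nu>] pointwise_left_kan_transfer[OF pw assms(4) \<nu>] by blast
qed

end
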